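(* Let $\mathcal{I}$ be a countable nonempty set of database instances, $\mathcal{L}$ a query language, and $p$ an answer-dependent pricing function. The following two statements are equivalent: (1) $p$ has no information arbitrage; (2) there is a set function $f$, defined on subsets of $\mathcal{I}$ and taking nonnegative real values, such that $p(\mathbf{Q},E)=f(\overline{\mathcal{S}}_{\mathbf{Q}}(E))$ for every query bundle $\mathbf{Q}\in B(\mathcal{L})$ and every $E\in\{\mathbf{Q}(D):D\in\mathcal{I}\}$, and $f$ is monotone over every semilattice $\mathcal{S}^{\mathcal{L}}_D$, $D\in\mathcal{I}$.
   Context: A query is a deterministic function on $\mathcal{I}$. A query bundle $\mathbf{Q}=(Q_1,\dots,Q_n)$ is a finite tuple of queries from $\mathcal{L}$, with $\mathbf{Q}(D)=(Q_1(D),\dots,Q_n(D))$; $B(\mathcal{L})$ is the set of all finite query bundles, and for $\mathbf{Q}_1,\mathbf{Q}_2\in B(\mathcal{L})$ their union (concatenation) $\mathbf{Q}_1,\mathbf{Q}_2$ is again in $B(\mathcal{L})$. An answer-dependent pricing function assigns a price $p(\mathbf{Q},E)\ge 0$ to each $\mathbf{Q}\in B(\mathcal{L})$ and each $E\in\{\mathbf{Q}(D):D\in\mathcal{I}\}$. For $D\in\mathcal{I}$ write $D\vdash \mathbf{Q}_2\twoheadrightarrow\mathbf{Q}_1$ if for every $D'\in\mathcal{I}$ with $\mathbf{Q}_2(D')=\mathbf{Q}_2(D)$ we have $\mathbf{Q}_1(D')=\mathbf{Q}_1(D)$. $p$ has no information arbitrage if for every $D\in\mathcal{I}$ and all $\mathbf{Q}_1,\mathbf{Q}_2\in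 B(\mathcal{L})$, $D\vdash \mathbf{Q}_2\twoheadrightarrow\mathbf{Q}_1$ implies $p(\mathbf{Q}_2,\mathbf{Q}_2(D))\ge p(\mathbf{Q}_1,\mathbf{Q}_1(D))$. The conflict set is $\overline{\mathcal{S}}_{\mathbf{Q}}(E)=\{D'\in\mathcal{I}:\mathbf{Q}(D')\neq E\}$. For $D\in\mathcal{I}$, $\mathcal{S}^{\mathcal{L}}_D=\{\overline{\mathcal{S}}_{\mathbf{Q}}(\mathbf{Q}(D)):\mathbf{Q}\in B(\mathcal{L})\}$, partially ordered by inclusion (a join-semilattice with join $\cup$). $f$ is monotone over $\mathcal{S}^{\mathcal{L}}_D$ if $A\subseteq B$ with $A,B\in\mathcal{S}^{\mathcal{L}}_D$ implies $f(A)\le f(B)$. *)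

theory Defs
  imports Complex_Main "HOL-Library.Countable_Set"
begin

text \<open>A query is a function
 'i => 'a (only its values on I matter); a query language L is a set of queries.
 A query bundle is a finite list of queries from L; concatenation is list append.\<close>

definition bundles :: "('i \<Rightarrow> 'a) set \<Rightarrow> ('i \<Rightarrow> 'a) list set" where
  "bundles L = {Q. set Q \<subseteq> L}"

definition eval_bundle :: "('i \<Rightarrow> 'a) list \<Rightarrow> 'i \<Rightarrow> 'a list" where
  "eval_bundle Q D = map (\<lambda>q. q D) Q"

definition determines :: "'i set \<Rightarrow> 'i \<Rightarrow> ('i \<Rightarrow> 'a) list \<Rightarrow> ('i \<Rightarrow> 'a) list \<Rightarrow> bool" where
  "determines I D Q2 Q1 \<longleftrightarrow>
     (\<forall>D'\<in>I. eval_bundle Q2 D' = eval_bundle Q2 D \<longrightarrow> eval_bundle Q1 D' = eval_bundle Q1 D)"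

definition no_info_arbitrage ::
  "'i set \<Rightarrow> ('i \<Rightarrow> 'a) set \<Rightarrow> (('i \<Rightarrow> 'a) list \<Rightarrow> 'a list \<Rightarrow> real) \<Rightarrow> bool" where
  "no_info_arbitrage I L p \<longleftrightarrow>
     (\<forall>D\<in>I. \<forall>Q1\<in>bundles L. \<forall>Q2\<in>bundles L.
        determines I D Q2 Q1 \<longrightarrow> p Q2 (eval_bundle Q2 D) \<ge> p Q1 (eval_bundle Q1 D))"

definition conflict_set :: "'i set \<Rightarrow> ('i \<Rightarrow> 'a) list \<Rightarrow> 'a list \<Rightarrow> 'i set" where
  "conflict_set I Q E = {D'\<in>I. eval_bundle Q D' \<noteq> E}"

definition semilat :: "'i set \<Rightarrow> ('i \<Rightarrow> 'a) set \<Rightarrow> 'i \<Rightarrow> 'i set set" where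
  "semilat I L D = {conflict_set I Q (eval_bundle Q D) | Q. Q \<in> bundles L}"

definition monotone_over :: "('i set \<Rightarrow> real) \<Rightarrow> 'i set set \<Rightarrow> bool" where
  "monotone_over f S \<longleftrightarrow> (\<forall>A\<in>S. \<forall>B\<in>S. A \<subseteq> B \<longrightarrow> f A \<le> f B)"

definition pricing_function ::
  "'i set \<Rightarrow> ('i \<Rightarrow> 'a) set \<Rightarrow> (('i \<Rightarrow> 'a) list \<Rightarrow> 'a list \<Rightarrow> real) \<Rightarrow> bool" where
  "pricing_function I L p \<longleftrightarrow> (\<forall>Q\<in>bundles L. \<forall>D\<in>I. p Q (eval_bundle Q D) \<ge> 0)"

end

theory Submission
  imports Defs
begin

text \<open>Determinacy at D is inclusion of conflict sets at D. Hence the price of a bundle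
  under no arbitrage depends only on its conflict set (two bundles with equal conflict sets
  determine each other), so it factors through a set function f; monotonicity of f on the
  conflict sets at D is then a restatement of no arbitrage at D.\<close>

lemma determines_iff_conflict_set_subset:
  assumes "D \<in> I"
  shows "determines I D Q2 Q1 \<longleftrightarrow>
    conflict_set I Q1 (eval_bundle Q1 D) \<subseteq> conflict_set I Q2 (eval_bundle Q2 D)"
  using assms unfolding determines_def conflict_set_def by blast

lemma price_eq_if_conflict_set_eq:
  assumes na: "no_info_arbitrage I L p"
    and Q: "Q \<in> bundles L" "D \<in> I" and Q': "Q' \<in> bundles L" "D' \<in> I"
    and eq: "conflict_set I Q (eval_bundle Q D) = conflict_set I Q' (eval_bundle Q' D')"
  shows "p Q (eval_bundle Q D) = p Q' (eval_bundle Q' D')"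
proof -
  have "D' \<notin> conflict_set I Q' (eval_bundle Q' D')"
    unfolding conflict_set_def by simp
  with eq Q'(2) have same_answer: "eval_bundle Q D' = eval_bundle Q D"
    unfolding conflict_set_def by auto
  with eq have "determines I D' Q Q'" and "determines I D' Q' Q"
    by (simp_all add: determines_iff_conflict_set_subset[OF Q'(2)])
  with na Q Q' have "p Q' (eval_bundle Q' D') \<le> p Q (eval_bundle Q D')"
      "p Q (eval_bundle Q D') \<le> p Q' (eval_bundle Q' D')"
    unfolding no_info_arbitrage_def by blast+
  with same_answer show ?thesis by simp
qed

definition conflict_price ::
  "'i set \<Rightarrow> ('i \<Rightarrow> 'a) set \<Rightarrow> (('i \<Rightarrow> 'a) list \<Rightarrow> 'a list \<Rightarrow> real) \<Rightarrow> 'i set \<Rightarrow> real" where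
  "conflict_price I L p A =
     (if \<exists>Q\<in>bundles L. \<exists>D\<in>I. A = conflict_set I Q (eval_bundle Q D)
      then SOME r. \<exists>Q\<in>bundles L. \<exists>D\<in>I. A = conflict_set I Q (eval_bundle Q D) \<and> r = p Q (eval_bundle Q D)
      else 0)"

lemma conflict_price_cases:
  obtains "\<not> (\<exists>Q\<in>bundles L. \<exists>D\<in>I. A = conflict_set I Q (eval_bundle Q D))"
    "conflict_price I L p A = 0"
  | Q D where "Q \<in> bundles L" "D \<in> I" "A = conflict_set I Q (eval_bundle Q D)"
      "conflict_price I L p A = p Q (eval_bundle Q D)"
proof (cases "\<exists>Q\<in>bundles L. \<exists>D\<in>I. A = conflict_set I Q (eval_bundle Q D)")
  case True
  then have "\<exists>r. \<exists>Q\<in>bundles L. \<exists>D\<in>I. A = conflict_set I Q (eval_bundle Q D) \<and> r = p Q (eval_bundle Q D)"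
    by blast
  from someI_ex[OF this] obtain Q D where
    "Q \<in> bundles L" "D \<in> I" "A = conflict_set I Q (eval_bundle Q D)"
    "(SOME r. \<exists>Q\<in>bundles L. \<exists>D\<in>I. A = conflict_set I Q (eval_bundle Q D) \<and> r = p Q (eval_bundle Q D))
       = p Q (eval_bundle Q D)"
    by blast
  with True show ?thesis
    using that(2) unfolding conflict_price_def by simp
next
  case False
  with that(1) show ?thesis
    unfolding conflict_price_def by simp
qed

lemma conflict_price_nonneg:
  assumes "pricing_function I L p"
  shows "conflict_price I L p A \<ge> 0"
  using assms
  by (cases rule: conflict_price_cases[where I=I and L=L and p=p and A=A])
    (auto simp: pricing_function_def)

lemma conflict_price_conflict_set:
  assumes "no_info_arbitrage I L p" and "Q \<in> bundles L" and "D \<in> I"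
  shows "conflict_price I L p (conflict_set I Q (eval_bundle Q D)) = p Q (eval_bundle Q D)"
proof (cases rule: conflict_price_cases[where I=I and L=L and p=p and A="conflict_set I Q (eval_bundle Q D)"])
  case 1
  with assms(2,3) show ?thesis
    by blast
next
  case (2 Q' D')
  then show ?thesis
    using price_eq_if_conflict_set_eq[OF assms(1) 2(1,2) assms(2,3)] by simp
qed

lemma monotone_over_semilat_iff:
  "monotone_over f (semilat I L D) \<longleftrightarrow>
    (\<forall>Q1\<in>bundles L. \<forall>Q2\<in>bundles L.
       conflict_set I Q1 (eval_bundle Q1 D) \<subseteq> conflict_set I Q2 (eval_bundle Q2 D) \<longrightarrow>
       f (conflict_set I Q1 (eval_bundle Q1 D)) \<le> f (conflict_set I Q2 (eval_bundle Q2 D)))"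
  unfolding monotone_over_def semilat_def by blast

lemma no_info_arbitrage_iff_monotone_over_semilat:
  assumes price: "\<forall>Q\<in>bundles L. \<forall>D\<in>I. p Q (eval_bundle Q D) = f (conflict_set I Q (eval_bundle Q D))"
  shows "no_info_arbitrage I L p \<longleftrightarrow> (\<forall>D\<in>I. monotone_over f (semilat I L D))"
  using price unfolding no_info_arbitrage_def monotone_over_semilat_iff
  by (simp add: determines_iff_conflict_set_subset)

theorem theorem1:
  fixes I :: "'i set" and L :: "('i \<Rightarrow> 'a) set"
    and p :: "('i \<Rightarrow> 'a) list \<Rightarrow> 'a list \<Rightarrow> real"
  assumes "countable I" and "I \<noteq> {}" and "pricing_function I L p"
  shows "no_info_arbitrage I L p \<longleftrightarrow>
    (\<exists>f :: 'i set \<Rightarrow> real.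
        (\<forall>A. A \<subseteq> I \<longrightarrow> f A \<ge> 0) \<and>
        (\<forall>Q\<in>bundles L. \<forall>D\<in>I. p Q (eval_bundle Q D) = f (conflict_set I Q (eval_bundle Q D))) \<and>
        (\<forall>D\<in>I. monotone_over f (semilat I L D)))"
proof
  assume na: "no_info_arbitrage I L p"
  let ?f = "conflict_price I L p"
  have price: "\<forall>Q\<in>bundles L. \<forall>D\<in>I. p Q (eval_bundle Q D) = ?f (conflict_set I Q (eval_bundle Q D))"
    using conflict_price_conflict_set[OF na] by simp
  moreover have "\<forall>D\<in>I. monotone_over ?f (semilat I L D)"
    using na no_info_arbitrage_iff_monotone_over_semilat[OF price] by simp
  ultimately show "\<exists>f. (\<forall>A. A \<subseteq> I \<longrightarrow> f A \<ge> 0) \<and>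
      (\<forall>Q\<in>bundles L. \<forall>D\<in>I. p Q (eval_bundle Q D) = f (conflict_set I Q (eval_bundle Q D))) \<and>
      (\<forall>D\<in>I. monotone_over f (semilat I L D))"
    using conflict_price_nonneg[OF assms(3)] by blast
next
  assume "\<exists>f :: 'i set \<Rightarrow> real. (\<forall>A. A \<subseteq> I \<longrightarrow> f A \<ge> 0) \<and>
      (\<forall>Q\<in>bundles L. \<forall>D\<in>I. p Q (eval_bundle Q D) = f (conflict_set I Q (eval_bundle Q D))) \<and>
      (\<forall>D\<in>I. monotone_over f (semilat I L D))"
  then show "no_info_arbitrage I L p"
    using no_info_arbitrage_iff_monotone_over_semilat by blast
qed

end
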